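(* Let $\theta:\mathbb{R}^n\to[-\infty,\infty]$ be a symmetric function and let $X\in\mathbf{S}^n$ with $(\theta\circ\lambda)(X)$ finite. Assume either (i) $\theta$ is lower semicontinuous and convex with $\partial\theta(\lambda(X))\neq\emptyset$, or (ii) $\theta$ is locally Lipschitz continuous around $\lambda(X)$ relative to its domain. Then for all $H\in\mathbf{S}^n$, $$\mathrm{d}(\theta\circ\lambda)(X)(H)=\mathrm{d}\theta(\lambda(X))\big(\lambda'(X;H)\big).$$
   Context: $\mathbf{S}^n$: real symmetric $n\times n$ matrices with trace inner product. $\lambda(X)$: eigenvalue vector in nonincreasing order. $\theta$ symmetric: $\theta(Px)=\theta(x)$ for all permutation matrices $P$. $\partial\theta$ is the convex-analysis subdifferential. Local Lipschitz continuity around $\bar x$ relative to the domain: $\theta(\bar x)$ finite and $|\theta(x)-\theta(y)|\le\ell\|x-y\|$ for all $x,y\in V\cap\mathrm{dom}\,\theta$, $V$ a neighborhood of $\bar x$. Subderivative: $\mathrm{d}f(\bar x)(\bar w)=\liminf_{t\downarrow0,\,w\to\bar w}\frac{f(\bar x+tw)-f(\bar x)}{t}$. If $\mu_1>\dots>\mu_r$ are the distinct eigenvalues of $X$, $\alpha_m=\{i:\lambda_i(X)=\mu_m\}$, $U$ is orthogonal with $X=U\mathrm{Diag}(\lambda(X))U^\top$, and $U_{\alpha_m}$ is the submatrix of $U$ formed by the columns indexed by $\alpha_m$, then the directional derivative $\lambda'(X;H)=\lim_{t\downarrow0}(\lambda(X+tH)-\lambda(X))/t$ exists and equals $\big(\lambda(U_{\alpha_1}^\top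 HU_{\alpha_1}),\dots,\lambda(U_{\alpha_r}^\top HU_{\alpha_r})\big)$. *)

theory Defs
  imports "HOL-Analysis.Analysis"
begin

text \<open>Real symmetric n x n matrices; the index type 'n is a finite linearly ordered
  type (of cardinality n), so that "nonincreasing order" of eigenvalues makes sense.\<close>

definition sym_mats :: "(real^'n^'n) set" where
  "sym_mats = {X. transpose X = X}"

definition diag_mat :: "real^'n \<Rightarrow> real^'n^'n" where
  "diag_mat l = (\<chi> i j. if i = j then l $ i else 0)"

definition nonincr_vec :: "(real, 'n::{finite,linorder}) vec \<Rightarrow> bool" where
  "nonincr_vec l \<longleftrightarrow> (\<forall>i j. i \<le> j \<longrightarrow> l $ j \<le> l $ i)"

definition eigvals :: "((real, 'n::{finite,linorder}) vec, 'n) vec \<Rightarrow> (real, 'n) vec" where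
  "eigvals X = (THE l. nonincr_vec l \<and>
      (\<exists>U. orthogonal_matrix U \<and> X = U ** diag_mat l ** transpose U))"

definition eigvals_dir :: "((real, 'n::{finite,linorder}) vec, 'n) vec \<Rightarrow> ((real, 'n) vec, 'n) vec \<Rightarrow> (real, 'n) vec" where
  "eigvals_dir X H = Lim (at_right 0) (\<lambda>t. (1 / t) *\<^sub>R (eigvals (X + t *\<^sub>R H) - eigvals X))"

definition symmetric_fun :: "(real^'n \<Rightarrow> ereal) \<Rightarrow> bool" where
  "symmetric_fun \<theta> \<longleftrightarrow> (\<forall>p x. p permutes (UNIV::'n set) \<longrightarrow> \<theta> (\<chi> i. x $ p i) = \<theta> x)"

definition edom :: "('a \<Rightarrow> ereal) \<Rightarrow> 'a set" where
  "edom f = {x. f x < \<infinity>}"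

definition convex_efun :: "('a::real_vector \<Rightarrow> ereal) \<Rightarrow> bool" where
  "convex_efun f \<longleftrightarrow> convex {(x, r::real). f x \<le> ereal r}"

definition lsc_efun :: "('a::topological_space \<Rightarrow> ereal) \<Rightarrow> bool" where
  "lsc_efun f \<longleftrightarrow> (\<forall>x. f x \<le> Liminf (at x) f)"

definition subdiff :: "('a::real_inner \<Rightarrow> ereal) \<Rightarrow> 'a \<Rightarrow> 'a set" where
  "subdiff f x = {v. \<forall>y. f y \<ge> f x + ereal (v \<bullet> (y - x))}"

definition loc_lipschitz_rel_dom :: "('a::real_normed_vector \<Rightarrow> ereal) \<Rightarrow> 'a \<Rightarrow> bool" where
  "loc_lipschitz_rel_dom f xb \<longleftrightarrow> \<bar>f xb\<bar> \<noteq> \<infinity> \<and>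
     (\<exists>l V. open V \<and> xb \<in> V \<and>
        (\<forall>x\<in>V \<inter> edom f. \<forall>y\<in>V \<inter> edom f. \<bar>f x - f y\<bar> \<le> ereal (l * norm (x - y))))"

text \<open>Subderivative of f at x in direction w, for f defined on the set S
  (directions w' range over S, which is the ambient space: UNIV or S^n).\<close>
definition subderiv :: "('a::real_normed_vector \<Rightarrow> ereal) \<Rightarrow> 'a set \<Rightarrow> 'a \<Rightarrow> 'a \<Rightarrow> ereal" where
  "subderiv f S x w = Liminf (at_right (0::real) \<times>\<^sub>F inf (nhds w) (principal S))
      (\<lambda>(t, w'). (f (x + t *\<^sub>R w') - f x) / ereal t)"

end

(* The eigenvalue map is globally Lipschitz and directionally differentiable on symmetric
   matrices.  Both facts come from Ky Fan's maximum principle: the sum of the k largest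
   eigenvalues is the maximum of k Rayleigh quotients over orthonormal systems, hence it is
   Lipschitz and convex, so its one-sided difference quotients converge; and the k-th eigenvalue
   is the difference of two such sums.
   The two subderivatives are then compared by transporting the liminfs that define them.  A
   pair (t, W) with W -> H gives (t, (lambda(X + tW) - lambda(X))/t), whose second entry tends to
   lambda'(X;H) by the Lipschitz bound.  Conversely, writing X + tH = U_t Diag(lambda(X + tH)) U_t^T,
   a pair (t, w) with w -> lambda'(X;H) gives W = (U_t Diag(lambda(X) + tw) U_t^T - X)/t, which
   tends to H, and theta(lambda(X + tW)) = theta(lambda(X) + tw) because theta is symmetric. *)

theory Submission
  imports Defs
begin

lemma inner_matrix_vector_transpose: "x \<bullet> (A *v y) = (transpose A *v x) \<bullet> (y::real^'n)"
  by (simp add: dot_lmul_matrix)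

lemma inner_matrix_vector_symmetric:
  "transpose A = A \<Longrightarrow> x \<bullet> (A *v y) = (A *v x) \<bullet> (y::real^'n)"
  by (metis inner_matrix_vector_transpose)

lemma transpose_diff: "transpose (A - B) = transpose A - transpose (B::'a::ab_group_add^_^_)"
  by (simp add: vec_eq_iff transpose_def)

lemma transpose_add_scaleR:
  "transpose A = A \<Longrightarrow> transpose B = B \<Longrightarrow> transpose (A + t *\<^sub>R B) = A + t *\<^sub>R (B::real^'n^'n)"
  by (simp add: transpose_def vec_eq_iff)

lemma matrix_mul_diff_ldistrib: "A ** (B - C) = A ** B - A ** (C::'a::ring_1^_^_)"
  by (simp add: vec_eq_iff matrix_matrix_mult_def right_diff_distrib sum_subtractf)

lemma matrix_mul_diff_rdistrib: "(A - B) ** C = A ** C - B ** (C::'a::ring_1^_^_)"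
  by (simp add: vec_eq_iff matrix_matrix_mult_def left_diff_distrib sum_subtractf)

lemma diag_mat_mult_vector_nth: "(diag_mat l *v y) $ i = l $ i * y $ i"
  by (simp add: diag_mat_def matrix_vector_mult_def if_distrib[of "\<lambda>a. a * _"] cong: if_cong)

lemma transpose_diag_mat: "transpose (diag_mat e) = diag_mat e"
  by (simp add: vec_eq_iff transpose_def diag_mat_def)

lemma transpose_conj_diag_mat:
  "transpose (U ** diag_mat e ** transpose U) = U ** diag_mat e ** transpose (U::real^'n^'m)"
  by (simp add: matrix_transpose_mul transpose_diag_mat matrix_mul_assoc)

lemma diag_mat_diff: "diag_mat a - diag_mat b = diag_mat (a - b)"
  by (simp add: vec_eq_iff diag_mat_def)

lemma orthogonal_matrix_row_sum_squares:
  "orthogonal_matrix M \<Longrightarrow> (\<Sum>j\<in>UNIV. (M $ i $ j)\<^sup>2) = 1"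
  by (simp add: orthogonal_matrix_def vec_eq_iff mat_def matrix_matrix_mult_def
      transpose_def power2_eq_square)

lemma orthogonal_matrix_column_sum_squares:
  "orthogonal_matrix M \<Longrightarrow> (\<Sum>i\<in>UNIV. (M $ i $ j)\<^sup>2) = 1"
  using orthogonal_matrix_row_sum_squares[of "transpose M" j]
  by (simp add: orthogonal_matrix_transpose) (simp add: transpose_def)

lemma quadratic_form_spectral:
  fixes A U :: "real^'n^'n"
  assumes "A = U ** diag_mat l ** transpose U"
  shows "x \<bullet> (A *v x) = (\<Sum>i\<in>UNIV. l $ i * ((transpose U *v x) $ i)\<^sup>2)"
proof -
  define y where "y = transpose U *v x"
  have "A *v x = U *v (diag_mat l *v y)"
    unfolding assms y_def by (simp only: matrix_vector_mul_assoc matrix_mul_assoc)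
  hence "x \<bullet> (A *v x) = y \<bullet> (diag_mat l *v y)"
    unfolding y_def by (simp add: inner_matrix_vector_transpose)
  also have "\<dots> = (\<Sum>i\<in>UNIV. l $ i * (y $ i)\<^sup>2)"
    unfolding inner_vec_def diag_mat_mult_vector_nth by (simp add: power2_eq_square mult_ac)
  finally show ?thesis unfolding y_def .
qed

lemma norm_vec_power2: "(norm v)\<^sup>2 = (\<Sum>i\<in>UNIV. (norm (v $ i))\<^sup>2)"
  for v :: "'a::real_normed_vector^'n"
  unfolding norm_vec_def L2_set_def by (simp add: sum_nonneg)

(* The norm on real^'n^'m is the Frobenius norm. *)
lemma norm_matrix_vector_le: "norm ((M::real^'n^'m) *v x) \<le> norm M * norm x"
proof (rule power2_le_imp_le)
  have "(norm (M *v x))\<^sup>2 = (\<Sum>i\<in>UNIV. (M $ i \<bullet> x)\<^sup>2)"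
    unfolding norm_vec_power2[of "M *v x"]
    by (intro sum.cong refl) (metis matrix_vector_mul_component real_norm_def power2_abs)
  also have "\<dots> \<le> (\<Sum>i\<in>UNIV. (norm (M $ i) * norm x)\<^sup>2)"
    by (rule sum_mono) (metis Cauchy_Schwarz_ineq2 abs_ge_zero power2_abs power_mono)
  also have "\<dots> = (norm M * norm x)\<^sup>2"
    using norm_vec_power2[of M] by (simp add: power_mult_distrib sum_distrib_right)
  finally show "(norm (M *v x))\<^sup>2 \<le> (norm M * norm x)\<^sup>2" .
qed simp

lemma norm_le_card_mult_nth_bound:
  assumes "\<And>i. \<bar>(v::real^'n) $ i\<bar> \<le> c"
  shows "norm v \<le> real CARD('n) * c"
proof -
  have "norm v \<le> (\<Sum>i\<in>UNIV. \<bar>v $ i\<bar>)" by (rule norm_le_l1_cart)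
  also have "\<dots> \<le> (\<Sum>i\<in>(UNIV::'n set). c)" by (rule sum_mono) (rule assms)
  finally show ?thesis by simp
qed

lemma norm_diag_mat: "norm (diag_mat (e::real^'n)) = norm e"
proof (rule power2_eq_imp_eq)
  have "norm (diag_mat e $ i) = norm (e $ i)" for i
  proof -
    have "diag_mat e $ i = e $ i *\<^sub>R axis i 1" by (simp add: diag_mat_def axis_def vec_eq_iff)
    thus ?thesis by simp
  qed
  thus "(norm (diag_mat e))\<^sup>2 = (norm e)\<^sup>2" by (simp add: norm_vec_power2)
qed simp_all

lemma norm_power2_eq_trace: "(norm A)\<^sup>2 = trace (transpose A ** (A::real^'n^'m))"
proof -
  have "(norm A)\<^sup>2 = (\<Sum>i\<in>UNIV. \<Sum>j\<in>UNIV. (norm (A $ i $ j))\<^sup>2)"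
    by (simp only: norm_vec_power2)
  also have "\<dots> = (\<Sum>j\<in>UNIV. \<Sum>i\<in>UNIV. A $ i $ j * A $ i $ j)"
    by (subst sum.swap) (simp add: power2_eq_square)
  also have "\<dots> = trace (transpose A ** A)"
    by (simp add: trace_def matrix_matrix_mult_def transpose_def)
  finally show ?thesis .
qed

lemma norm_orthogonal_conj:
  assumes "orthogonal_matrix (W::real^'n^'n)"
  shows "norm (W ** M ** transpose W) = norm M"
proof (rule power2_eq_imp_eq)
  have WW: "transpose W ** W = mat 1" using assms by (simp add: orthogonal_matrix)
  have "transpose (W ** M ** transpose W) ** (W ** M ** transpose W)
      = W ** ((transpose M ** M) ** transpose W)"
    by (simp add: matrix_transpose_mul) (metis WW matrix_mul_assoc matrix_mul_rid)
  hence "trace (transpose (W ** M ** transpose W) ** (W ** M ** transpose W))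
      = trace ((transpose M ** M) ** transpose W ** W)"
    using trace_mul_sym[of W "(transpose M ** M) ** transpose W"] by simp
  also have "\<dots> = trace (transpose M ** M)"
    by (metis WW matrix_mul_assoc matrix_mul_rid)
  finally show "(norm (W ** M ** transpose W))\<^sup>2 = (norm M)\<^sup>2"
    by (simp only: norm_power2_eq_trace)
qed simp_all

section \<open>The spectral theorem\<close>

lemma quadratic_le_zero_imp_linear_coeff_zero:
  fixes a k :: real
  assumes le: "\<And>s. 2 * s * a + s\<^sup>2 * k \<le> 0"
  shows "a = 0"
proof (rule ccontr)
  assume "a \<noteq> 0"
  define c where "c = \<bar>k\<bar> + 1"
  have c: "0 < c" "\<bar>k\<bar> \<le> c" unfolding c_def by auto
  have "(a / c)\<^sup>2 * \<bar>k\<bar> \<le> (a / c) * a"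
  proof -
    have "(a / c)\<^sup>2 * \<bar>k\<bar> = a\<^sup>2 * \<bar>k\<bar> / c\<^sup>2" by (simp add: power_divide)
    also have "\<dots> \<le> a\<^sup>2 * c / c\<^sup>2" using c by (intro divide_right_mono mult_left_mono) auto
    also have "\<dots> = (a / c) * a" using c by (simp add: power2_eq_square)
    finally show ?thesis .
  qed
  moreover have "- ((a / c)\<^sup>2 * \<bar>k\<bar>) \<le> (a / c)\<^sup>2 * k"
    using mult_left_mono[OF abs_ge_minus_self[of k], of "(a / c)\<^sup>2"] by simp
  moreover have "0 < (a / c) * a" using \<open>a \<noteq> 0\<close> c
    by (simp add: zero_less_divide_iff) (metis not_real_square_gt_zero)
  ultimately show False using le[of "a / c"] by linarith
qed

lemma rayleigh_maximizer_is_eigenvector: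
  fixes A :: "real^'n^'n"
  assumes symA: "transpose A = A" and S: "subspace S" and inv: "\<forall>x\<in>S. A *v x \<in> S"
    and uS: "u \<in> S" and u1: "norm u = 1"
    and max: "\<forall>x\<in>S. x \<bullet> (A *v x) \<le> (u \<bullet> (A *v u)) * (x \<bullet> x)"
  shows "A *v u = (u \<bullet> (A *v u)) *\<^sub>R u"
proof -
  define \<mu> where "\<mu> = u \<bullet> (A *v u)"
  define r where "r = A *v u - \<mu> *\<^sub>R u"
  have rS: "r \<in> S" unfolding r_def using S inv uS by (simp add: subspace_diff subspace_scale)
  have uu: "u \<bullet> u = 1" using u1 by (simp add: norm_eq_1)
  have rAu: "r \<bullet> (A *v u) = r \<bullet> r + \<mu> * (u \<bullet> r)"
    unfolding r_def by (simp add: inner_diff_left inner_diff_right inner_commute algebra_simps)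
  (* Maximality of the quotient at u, tested along u + s r. *)
  have "2 * s * (r \<bullet> r) + s\<^sup>2 * (r \<bullet> (A *v r) - \<mu> * (r \<bullet> r)) \<le> 0" for s
  proof -
    have "u + s *\<^sub>R r \<in> S" using S uS rS by (simp add: subspace_add subspace_scale)
    hence "(u + s *\<^sub>R r) \<bullet> (A *v (u + s *\<^sub>R r)) \<le> \<mu> * ((u + s *\<^sub>R r) \<bullet> (u + s *\<^sub>R r))"
      using max unfolding \<mu>_def by blast
    moreover have "u \<bullet> (A *v r) = r \<bullet> (A *v u)"
      using inner_matrix_vector_symmetric[OF symA, of u r] by (simp add: inner_commute)
    ultimately show ?thesis
      using uu rAu unfolding \<mu>_def
      by (simp add: matrix_vector_right_distrib matrix_vector_mult_scaleR inner_add_left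
          inner_add_right inner_commute algebra_simps power2_eq_square)
  qed
  hence "r \<bullet> r = 0" by (rule quadratic_le_zero_imp_linear_coeff_zero)
  thus ?thesis unfolding r_def \<mu>_def by simp
qed

lemma rayleigh_quotient_max_exists:
  fixes A :: "real^'n^'n"
  assumes sS: "subspace S" and nz: "S \<noteq> {0}"
  shows "\<exists>u\<in>S. norm u = 1 \<and> (\<forall>x\<in>S. x \<bullet> (A *v x) \<le> (u \<bullet> (A *v u)) * (x \<bullet> x))"
proof -
  let ?K = "S \<inter> sphere 0 1"
  let ?f = "\<lambda>x. x \<bullet> (A *v x)"
  have cK: "compact ?K" using closed_subspace[OF sS] by (simp add: closed_Int_compact)
  obtain x where x: "x \<in> S" "x \<noteq> 0" using nz subspace_0[OF sS] by blast
  have "x /\<^sub>R norm x \<in> ?K" using x sS by (simp add: subspace_scale)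
  hence neK: "?K \<noteq> {}" by blast
  have "continuous_on ?K ?f"
    by (intro continuous_intros linear_continuous_on matrix_vector_mul_bounded_linear)
  then obtain u where u: "u \<in> ?K" "\<forall>y\<in>?K. ?f y \<le> ?f u"
    using continuous_attains_sup[OF cK neK] by blast
  show ?thesis
  proof (intro bexI conjI ballI)
    show "u \<in> S" "norm u = 1" using u by auto
    fix y assume yS: "y \<in> S"
    show "?f y \<le> ?f u * (y \<bullet> y)"
    proof (cases "y = 0")
      case True thus ?thesis by simp
    next
      case False
      define z where "z = y /\<^sub>R norm y"
      have "z \<in> ?K" unfolding z_def using yS False sS by (simp add: subspace_scale)
      hence "?f z \<le> ?f u" using u by blast
      moreover have "?f y = (norm y)^2 * ?f z"
        unfolding z_def using False
        by (simp add: matrix_vector_mult_scaleR power2_eq_square field_simps)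
      moreover have "y \<bullet> y = (norm y)^2" by (simp add: power2_norm_eq_inner)
      moreover have "?f z * (norm y)^2 \<le> ?f u * (norm y)^2"
        by (rule mult_right_mono) (use \<open>?f z \<le> ?f u\<close> in simp_all)
      ultimately show ?thesis by (simp add: mult.commute)
    qed
  qed
qed

lemma symmetric_eigenvector_orthogonal_to:
  fixes A :: "real^'n^'n"
  assumes symA: "transpose A = A"
    and eB: "\<forall>b\<in>B. norm b = 1 \<and> (\<exists>\<mu>. A *v b = \<mu> *\<^sub>R b)"
    and oB: "pairwise orthogonal B" and cB: "card B < CARD('n)"
  shows "\<exists>u. norm u = 1 \<and> (\<exists>\<mu>. A *v u = \<mu> *\<^sub>R u) \<and> (\<forall>b\<in>B. orthogonal b u)"
proof -
  define S where "S = {y. \<forall>x\<in>B. orthogonal x y}"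
  have sS: "subspace S" unfolding S_def by (rule subspace_orthogonal_to_vectors)
  have inv: "\<forall>x\<in>S. A *v x \<in> S"
  proof (intro ballI)
    fix x assume x: "x \<in> S"
    { fix b assume b: "b \<in> B"
      then obtain \<mu> where m: "A *v b = \<mu> *\<^sub>R b" using eB by blast
      have "b \<bullet> (A *v x) = (A *v b) \<bullet> x" by (rule inner_matrix_vector_symmetric[OF symA])
      also have "\<dots> = \<mu> * (b \<bullet> x)" using m by simp
      also have "\<dots> = 0" using x b unfolding S_def orthogonal_def by simp
      finally have "orthogonal b (A *v x)" unfolding orthogonal_def . }
    thus "A *v x \<in> S" unfolding S_def by blast
  qed
  have "0 \<notin> B" using eB by force
  hence ind: "independent B" using oB pairwise_orthogonal_independent by blast
  have dB: "dim B < DIM(real^'n)" using dim_eq_card_independent[OF ind] cB by simp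
  obtain x where x: "x \<noteq> 0" "\<And>y. y \<in> span B \<Longrightarrow> orthogonal x y"
    using orthogonal_to_subspace_exists[OF dB] by blast
  have "x \<in> S" unfolding S_def using x(2) span_base orthogonal_commute by blast
  hence "S \<noteq> {0}" using x(1) by blast
  then obtain u where u: "u \<in> S" "norm u = 1" "\<forall>x\<in>S. x \<bullet> (A *v x) \<le> (u \<bullet> (A *v u)) * (x \<bullet> x)"
    using rayleigh_quotient_max_exists[OF sS] by blast
  have "A *v u = (u \<bullet> (A *v u)) *\<^sub>R u" by (rule rayleigh_maximizer_is_eigenvector[OF symA sS inv u])
  thus ?thesis using u unfolding S_def by blast
qed

lemma symmetric_orthonormal_eigenvectors:
  fixes A :: "real^'n^'n"
  assumes symA: "transpose A = A"
  shows "k \<le> CARD('n) \<Longrightarrow> \<exists>B. finite B \<and> card B = k \<and>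
    (\<forall>b\<in>B. norm b = 1 \<and> (\<exists>\<mu>. A *v b = \<mu> *\<^sub>R b)) \<and> pairwise orthogonal B"
proof (induction k)
  case 0 thus ?case by (intro exI[of _ "{}"]) auto
next
  case (Suc k)
  then obtain B where B: "finite B" "card B = k" "\<forall>b\<in>B. norm b = 1 \<and> (\<exists>\<mu>. A *v b = \<mu> *\<^sub>R b)"
     "pairwise orthogonal B" by auto
  obtain u where u: "norm u = 1" "\<exists>\<mu>. A *v u = \<mu> *\<^sub>R u" "\<forall>b\<in>B. orthogonal b u"
    using symmetric_eigenvector_orthogonal_to[OF symA B(3) B(4)] B(2) Suc.prems by auto
  have "u \<notin> B" using u by (metis orthogonal_self norm_zero zero_neq_one)
  show ?case
  proof (intro exI[of _ "insert u B"] conjI)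
    show "finite (insert u B)" using B by simp
    show "card (insert u B) = Suc k" using B \<open>u \<notin> B\<close> by simp
    show "\<forall>b\<in>insert u B. norm b = 1 \<and> (\<exists>\<mu>. A *v b = \<mu> *\<^sub>R b)" using B u by auto
    show "pairwise orthogonal (insert u B)" using B(4) u(3)
      by (auto simp: pairwise_insert orthogonal_commute)
  qed
qed

lemma symmetric_orthonormal_eigenbasis:
  fixes A :: "real^'n^'n"
  assumes symA: "transpose A = A"
  shows "\<exists>(c::'n \<Rightarrow> real^'n) \<mu>. (\<forall>i. A *v c i = \<mu> i *\<^sub>R c i) \<and> (\<forall>i j. c i \<bullet> c j = (if i = j then 1 else 0))"
proof -
  obtain B where B: "finite B" "card B = CARD('n)" "\<forall>b\<in>B. norm b = 1 \<and> (\<exists>\<mu>. A *v b = \<mu> *\<^sub>R b)"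
     "pairwise orthogonal B" using symmetric_orthonormal_eigenvectors[OF symA, of "CARD('n)"] by auto
  obtain h where h: "bij_betw h (UNIV::'n set) B"
    using finite_same_card_bij[of "UNIV::'n set" B] B by auto
  define \<mu> where "\<mu> i = (SOME m. A *v h i = m *\<^sub>R h i)" for i
  have hB: "h i \<in> B" for i using h by (auto simp: bij_betw_def)
  have "\<forall>i. A *v h i = \<mu> i *\<^sub>R h i"
  proof
    fix i
    have "\<exists>m. A *v h i = m *\<^sub>R h i" using B(3) hB[of i] by blast
    thus "A *v h i = \<mu> i *\<^sub>R h i" unfolding \<mu>_def by (rule someI_ex)
  qed
  moreover have "h i \<bullet> h j = (if i = j then 1 else 0)" for i j
  proof (cases "i = j")
    case True thus ?thesis using B(3) hB[of i] by (simp add: norm_eq_1)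
  next
    case False
    hence "h i \<noteq> h j" using h by (auto simp: bij_betw_def inj_on_def)
    thus ?thesis using B(4) hB[of i] hB[of j] False by (auto simp: pairwise_def orthogonal_def)
  qed
  ultimately show ?thesis by blast
qed

lemma sorting_permutation_exists:
  fixes f :: "'n::{finite,linorder} \<Rightarrow> real"
  shows "\<exists>p. p permutes (UNIV::'n set) \<and> (\<forall>i j. i \<le> j \<longrightarrow> f (p j) \<le> f (p i))"
proof -
  (* A permutation maximizing the score against strictly decreasing weights has no inversion:
     swapping an inversion would increase the score. *)
  define w :: "'n \<Rightarrow> real" where "w i = real (card {j. i < j})" for i
  have wmono: "w j < w i" if "i < j" for i j
  proof -
    have "{k. j < k} \<subset> {k. i < k}" using that by auto
    hence "card {k. j < k} < card {k. i < k}" by (simp add: psubset_card_mono)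
    thus ?thesis unfolding w_def by simp
  qed
  define P where "P = {p. p permutes (UNIV::'n set)}"
  define sc where "sc p = (\<Sum>i\<in>UNIV. w i * f (p i))" for p :: "'n \<Rightarrow> 'n"
  have fP: "finite P" unfolding P_def by (simp add: finite_permutations)
  have neP: "P \<noteq> {}" unfolding P_def using permutes_id by blast
  define M where "M = Max (sc ` P)"
  have "M \<in> sc ` P" unfolding M_def using fP neP by (intro Max_in) auto
  then obtain p where pP: "p \<in> P" and pM: "sc p = M" by auto
  have maxp: "sc q \<le> sc p" if "q \<in> P" for q using that fP pM unfolding M_def by simp
  show ?thesis
  proof (intro exI conjI allI impI)
    show "p permutes UNIV" using pP unfolding P_def by simp
    fix i j :: 'n assume ij: "i \<le> j"
    show "f (p j) \<le> f (p i)"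
    proof (rule ccontr)
      assume c: "\<not> f (p j) \<le> f (p i)"
      hence "i \<noteq> j" by auto
      hence ilj: "i < j" using ij by simp
      define q where "q = p \<circ> Transposition.transpose i j"
      have qP: "q \<in> P" unfolding q_def P_def using pP unfolding P_def
        by (simp add: permutes_compose permutes_swap_id)
      have "sc q - sc p = (\<Sum>k\<in>UNIV. w k * (f (q k) - f (p k)))"
        unfolding sc_def by (simp add: sum_subtractf algebra_simps)
      also have "\<dots> = (\<Sum>k\<in>{i,j}. w k * (f (q k) - f (p k)))"
        by (rule sum.mono_neutral_right) (auto simp: q_def transpose_def)
      also have "\<dots> = (w i - w j) * (f (p j) - f (p i))"
        using \<open>i \<noteq> j\<close> by (simp add: q_def algebra_simps)
      also have "\<dots> > 0" using wmono[OF ilj] c by simp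
      finally show False using maxp[OF qP] by simp
    qed
  qed
qed

lemma orthonormal_eigenbasis_diagonalizes:
  fixes A :: "real^'n^'n"
  assumes ev: "\<forall>i. A *v c i = \<mu> i *\<^sub>R c i"
    and on: "\<forall>i j. c i \<bullet> c j = (if i = j then 1 else 0)"
    and p: "p permutes (UNIV::'n set)"
  defines "U \<equiv> (\<chi> r j. c (p j) $ r)"
  shows "orthogonal_matrix U \<and> A = U ** diag_mat (\<chi> j. \<mu> (p j)) ** transpose U"
proof -
  have "transpose U ** U = mat 1"
  proof -
    have "(transpose U ** U) $ j $ k = mat 1 $ j $ k" for j k
    proof -
      have "(transpose U ** U) $ j $ k = c (p j) \<bullet> c (p k)"
        unfolding U_def matrix_matrix_mult_def transpose_def inner_vec_def by simp
      also have "\<dots> = (if j = k then 1 else 0)" using on permutes_inj[OF p]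
        by (simp add: inj_eq)
      finally show ?thesis by (simp add: mat_def)
    qed
    thus ?thesis by (simp add: vec_eq_iff)
  qed
  hence oU: "orthogonal_matrix U" by (simp add: orthogonal_matrix)
  have AU: "A ** U = U ** diag_mat (\<chi> j. \<mu> (p j))"
  proof -
    have "(A ** U) $ r $ j = (U ** diag_mat (\<chi> j. \<mu> (p j))) $ r $ j" for r j
    proof -
      have "(A ** U) $ r $ j = (A *v c (p j)) $ r"
        unfolding U_def matrix_matrix_mult_def matrix_vector_mult_def by simp
      also have "\<dots> = \<mu> (p j) * c (p j) $ r" using ev by simp
      also have "\<dots> = (U ** diag_mat (\<chi> j. \<mu> (p j))) $ r $ j"
        unfolding U_def matrix_matrix_mult_def diag_mat_def
        by (simp add: if_distrib cong: if_cong)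
      finally show ?thesis .
    qed
    thus ?thesis by (simp add: vec_eq_iff)
  qed
  have "A = A ** (U ** transpose U)" using oU by (simp add: orthogonal_matrix_def)
  also have "\<dots> = U ** diag_mat (\<chi> j. \<mu> (p j)) ** transpose U"
    by (simp add: matrix_mul_assoc AU)
  finally show ?thesis using oU by simp
qed

lemma spectral_decomposition_sorted:
  fixes A :: "((real,'n::{finite,linorder}) vec,'n) vec"
  assumes symA: "transpose A = A"
  shows "\<exists>U l. orthogonal_matrix U \<and> nonincr_vec l \<and> A = U ** diag_mat l ** transpose U"
proof -
  obtain c :: "'n \<Rightarrow> (real,'n) vec" and \<mu> where cm: "\<forall>i. A *v c i = \<mu> i *\<^sub>R c i" "\<forall>i j. c i \<bullet> c j = (if i = j then 1 else 0)"
    using symmetric_orthonormal_eigenbasis[OF symA] by blast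
  obtain p where p: "p permutes UNIV" "\<forall>i j. i \<le> j \<longrightarrow> \<mu> (p j) \<le> \<mu> (p i)"
    using sorting_permutation_exists[of \<mu>] by blast
  have "nonincr_vec (\<chi> j. \<mu> (p j))" unfolding nonincr_vec_def using p(2) by simp
  thus ?thesis using orthonormal_eigenbasis_diagonalizes[OF cm p(1)] by blast
qed

section \<open>Ky Fan's maximum principle and the eigenvalue map\<close>

definition down_closed :: "'a::order set \<Rightarrow> bool" where
  "down_closed T \<longleftrightarrow> (\<forall>i\<in>T. \<forall>j\<le>i. j \<in> T)"

lemma down_closed_atMost: "down_closed {..i}"
  unfolding down_closed_def by auto

lemma down_closed_lessThan: "down_closed {..<i}"
  unfolding down_closed_def by auto

lemma sum_atMost_eq_lessThan:
  fixes f :: "'n::{finite,linorder} \<Rightarrow> real"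
  shows "sum f {..i} = f i + sum f {..<i}"
proof -
  have "{..i} = insert i {..<i}" by auto
  thus ?thesis by simp
qed

lemma nonincr_vec_threshold:
  assumes l: "nonincr_vec l" and T: "down_closed T"
  obtains c where "\<forall>i\<in>T. c \<le> l $ i" and "\<forall>i\<in>-T. l $ i \<le> c"
proof (cases "T = {}")
  case True
  show ?thesis by (rule that[of "Max (range (\<lambda>i. l $ i))"]) (auto simp: True)
next
  case False
  have "l $ j \<le> l $ i" if "i \<in> T" "j \<notin> T" for i j
  proof -
    have "i \<le> j" using T that unfolding down_closed_def by (meson linear)
    thus ?thesis using l unfolding nonincr_vec_def by blast
  qed
  thus ?thesis using False by (intro that[of "Min ((\<lambda>i. l $ i) ` T)"]) auto
qed

lemma weighted_sum_le_sum_largest: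
  fixes l :: "real^'n::{finite,linorder}"
  assumes l: "nonincr_vec l" and T: "down_closed T"
    and p0: "\<And>i. 0 \<le> p i" and p1: "\<And>i. p i \<le> 1" and ps: "(\<Sum>i\<in>UNIV. p i) = real (card T)"
  shows "(\<Sum>i\<in>UNIV. l $ i * p i) \<le> (\<Sum>i\<in>T. l $ i)"
proof -
  obtain c where cT: "\<forall>i\<in>T. c \<le> l $ i" and cT': "\<forall>i\<in>-T. l $ i \<le> c"
    using nonincr_vec_threshold[OF l T] by blast
  have termwise: "(l $ i - c) * p i \<le> (if i \<in> T then l $ i - c else 0)" for i
  proof (cases "i \<in> T")
    case True thus ?thesis using cT p1[of i] by (simp add: mult_left_le)
  next
    case False thus ?thesis using cT' p0[of i] by (simp add: mult_nonpos_nonneg)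
  qed
  have "(\<Sum>i\<in>UNIV. l $ i * p i) = (\<Sum>i\<in>UNIV. (l $ i - c) * p i) + c * real (card T)"
    using ps by (simp add: algebra_simps sum_subtractf flip: sum_distrib_left)
  also have "\<dots> \<le> (\<Sum>i\<in>UNIV. if i \<in> T then l $ i - c else 0) + c * real (card T)"
    using termwise by (simp add: sum_mono)
  also have "\<dots> = (\<Sum>i\<in>T. l $ i)"
    by (simp add: sum.If_cases sum_subtractf)
  finally show ?thesis .
qed

lemma rayleigh_sum_le_sum_largest:
  fixes A U W :: "((real,'n::{finite,linorder}) vec,'n) vec"
  assumes oU: "orthogonal_matrix U" and l: "nonincr_vec l" and A: "A = U ** diag_mat l ** transpose U"
    and oW: "orthogonal_matrix W" and T: "down_closed T" and J: "card J = card T"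
  shows "(\<Sum>j\<in>J. column j W \<bullet> (A *v column j W)) \<le> (\<Sum>i\<in>T. l $ i)"
proof -
  define M where "M = transpose U ** W"
  have oM: "orthogonal_matrix M" unfolding M_def using oU oW
    by (simp add: orthogonal_matrix_mul)
  have col: "(transpose U *v column j W) $ i = M $ i $ j" for i j
    unfolding M_def matrix_vector_mult_def matrix_matrix_mult_def column_def by simp
  define p where "p i = (\<Sum>j\<in>J. (M $ i $ j)\<^sup>2)" for i
  have "(\<Sum>j\<in>J. column j W \<bullet> (A *v column j W)) = (\<Sum>j\<in>J. \<Sum>i\<in>UNIV. l $ i * (M $ i $ j)\<^sup>2)"
    by (simp only: quadratic_form_spectral[OF A] col)
  also have "\<dots> = (\<Sum>i\<in>UNIV. l $ i * p i)"
    unfolding p_def by (simp add: sum.swap[of _ J] sum_distrib_left)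
  also have "\<dots> \<le> (\<Sum>i\<in>T. l $ i)"
  proof (rule weighted_sum_le_sum_largest[OF l T])
    show "0 \<le> p i" for i unfolding p_def by (simp add: sum_nonneg)
    show "p i \<le> 1" for i
      using sum_mono2[of UNIV J "\<lambda>j. (M $ i $ j)\<^sup>2"] orthogonal_matrix_row_sum_squares[OF oM]
      unfolding p_def by simp
    have "(\<Sum>i\<in>UNIV. p i) = (\<Sum>j\<in>J. \<Sum>i\<in>UNIV. (M $ i $ j)\<^sup>2)"
      unfolding p_def by (rule sum.swap)
    thus "(\<Sum>i\<in>UNIV. p i) = real (card T)"
      using orthogonal_matrix_column_sum_squares[OF oM] J by simp
  qed
  finally show ?thesis .
qed

lemma rayleigh_quotient_column:
  fixes A U :: "((real,'n::{finite,linorder}) vec,'n) vec"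
  assumes oU: "orthogonal_matrix U" and A: "A = U ** diag_mat l ** transpose U"
  shows "column j U \<bullet> (A *v column j U) = l $ j"
proof -
  have "(transpose U *v column j U) $ i = (transpose U ** U) $ i $ j" for i
    unfolding matrix_vector_mult_def matrix_matrix_mult_def column_def by simp
  hence "(transpose U *v column j U) $ i = (if i = j then 1 else 0)" for i
    using oU by (simp add: orthogonal_matrix mat_def)
  hence "(\<Sum>i\<in>UNIV. l $ i * ((transpose U *v column j U) $ i)\<^sup>2)
      = (\<Sum>i\<in>UNIV. if i = j then l $ j else 0)"
    by (intro sum.cong) auto
  thus ?thesis unfolding quadratic_form_spectral[OF A] by simp
qed

(* Ky Fan: for nonincreasing l the sum of its first k entries is the maximum of k Rayleigh
   quotients of A over orthonormal systems, so it depends on A only. *)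
lemma spectral_eigenvalues_unique:
  fixes A U1 U2 :: "((real,'n::{finite,linorder}) vec,'n) vec"
  assumes o1: "orthogonal_matrix U1" and n1: "nonincr_vec l1" and A1: "A = U1 ** diag_mat l1 ** transpose U1"
    and o2: "orthogonal_matrix U2" and n2: "nonincr_vec l2" and A2: "A = U2 ** diag_mat l2 ** transpose U2"
  shows "l1 = l2"
proof -
  have le: "(\<Sum>i\<in>T. lb $ i) \<le> (\<Sum>i\<in>T. la $ i)"
    if "down_closed T" "orthogonal_matrix Ua" "nonincr_vec la" "A = Ua ** diag_mat la ** transpose Ua"
       "orthogonal_matrix Ub" "A = Ub ** diag_mat lb ** transpose Ub" for T la lb Ua Ub
  proof -
    have "(\<Sum>i\<in>T. lb $ i) = (\<Sum>j\<in>T. column j Ub \<bullet> (A *v column j Ub))"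
      using rayleigh_quotient_column[OF that(5,6)] by simp
    also have "\<dots> \<le> (\<Sum>i\<in>T. la $ i)"
      by (rule rayleigh_sum_le_sum_largest[OF that(2-5,1)]) simp
    finally show ?thesis .
  qed
  have eq: "(\<Sum>i\<in>T. l1 $ i) = (\<Sum>i\<in>T. l2 $ i)" if "down_closed T" for T
    using le[OF that o1 n1 A1 o2 A2] le[OF that o2 n2 A2 o1 A1] by simp
  show ?thesis
  proof (rule vec_eq_iff[THEN iffD2], rule allI)
    fix i
    show "l1 $ i = l2 $ i"
      using eq[OF down_closed_atMost[of i]] eq[OF down_closed_lessThan[of i]]
      by (simp add: sum_atMost_eq_lessThan[of "\<lambda>j. l1 $ j"] sum_atMost_eq_lessThan[of "\<lambda>j. l2 $ j"])
  qed
qed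

lemma eigvals_eqI:
  fixes A U :: "((real,'n::{finite,linorder}) vec,'n) vec"
  assumes "orthogonal_matrix U" "nonincr_vec l" "A = U ** diag_mat l ** transpose U"
  shows "eigvals A = l"
  unfolding eigvals_def
proof (rule the_equality)
  show "nonincr_vec l \<and> (\<exists>U. orthogonal_matrix U \<and> A = U ** diag_mat l ** transpose U)"
    using assms by blast
  fix l' assume "nonincr_vec l' \<and> (\<exists>U. orthogonal_matrix U \<and> A = U ** diag_mat l' ** transpose U)"
  thus "l' = l" using spectral_eigenvalues_unique[OF _ _ _ assms] by blast
qed

lemma eigvals_spectral_decomposition:
  fixes A :: "((real,'n::{finite,linorder}) vec,'n) vec"
  assumes "transpose A = A"
  obtains U where "orthogonal_matrix U" "A = U ** diag_mat (eigvals A) ** transpose U"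
  using spectral_decomposition_sorted[OF assms] eigvals_eqI by metis

lemma nonincr_vec_eigvals:
  fixes A :: "((real,'n::{finite,linorder}) vec,'n) vec"
  shows "transpose A = A \<Longrightarrow> nonincr_vec (eigvals A)"
  using spectral_decomposition_sorted eigvals_eqI by metis

lemma eigvals_orthogonal_conj:
  fixes A W :: "((real,'n::{finite,linorder}) vec,'n) vec"
  assumes W: "orthogonal_matrix W" and A: "transpose A = A"
  shows "eigvals (W ** A ** transpose W) = eigvals A"
proof -
  obtain U where U: "orthogonal_matrix U" "A = U ** diag_mat (eigvals A) ** transpose U"
    using eigvals_spectral_decomposition[OF A] .
  have "W ** A ** transpose W = (W ** U) ** diag_mat (eigvals A) ** transpose (W ** U)"
    by (subst U(2)) (simp add: matrix_transpose_mul matrix_mul_assoc)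
  thus ?thesis
    using W U(1) nonincr_vec_eigvals[OF A] by (intro eigvals_eqI) (auto simp: orthogonal_matrix_mul)
qed

lemma symmetric_fun_eigvals_diag_mat:
  fixes \<theta> :: "(real, 'n::{finite,linorder}) vec \<Rightarrow> ereal"
  assumes "symmetric_fun \<theta>"
  shows "\<theta> (eigvals (diag_mat v)) = \<theta> v"
proof -
  obtain p where p: "p permutes (UNIV::'n set)" "\<forall>i j. i \<le> j \<longrightarrow> v $ p j \<le> v $ p i"
    using sorting_permutation_exists[of "\<lambda>i. v $ i"] by blast
  have ev: "\<forall>i. diag_mat v *v axis i 1 = v $ i *\<^sub>R axis i (1::real)"
    by (simp add: vec_eq_iff diag_mat_mult_vector_nth axis_def)
  have on: "\<forall>i j. axis i (1::real) \<bullet> axis j 1 = (if i = j then 1 else 0)"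
    by (simp add: inner_axis_axis)
  obtain U where "orthogonal_matrix U" "diag_mat v = U ** diag_mat (\<chi> j. v $ p j) ** transpose U"
    using orthonormal_eigenbasis_diagonalizes[OF ev on p(1)] by blast
  moreover have "nonincr_vec (\<chi> j. v $ p j)" unfolding nonincr_vec_def using p(2) by simp
  ultimately have "eigvals (diag_mat v) = (\<chi> j. v $ p j)" by (blast intro: eigvals_eqI)
  thus ?thesis using assms p(1) unfolding symmetric_fun_def by simp
qed

section \<open>Sums of largest eigenvalues: Lipschitz continuity, convexity, directional derivatives\<close>

definition eigvals_sum :: "'n set \<Rightarrow> ((real,'n::{finite,linorder}) vec,'n) vec \<Rightarrow> real" where
  "eigvals_sum T A = (\<Sum>i\<in>T. eigvals A $ i)"

lemma eigvals_nth_eq_eigvals_sum_diff: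
  "eigvals A $ i = eigvals_sum {..i} A - eigvals_sum {..<i} A"
  unfolding eigvals_sum_def by (simp add: sum_atMost_eq_lessThan[of "\<lambda>j. eigvals A $ j"])

lemma rayleigh_sum_le_eigvals_sum:
  fixes A W :: "((real,'n::{finite,linorder}) vec,'n) vec"
  assumes "transpose A = A" "down_closed T" "orthogonal_matrix W" "card J = card T"
  shows "(\<Sum>j\<in>J. column j W \<bullet> (A *v column j W)) \<le> eigvals_sum T A"
proof -
  obtain U where "orthogonal_matrix U" "A = U ** diag_mat (eigvals A) ** transpose U"
    using eigvals_spectral_decomposition[OF assms(1)] .
  thus ?thesis unfolding eigvals_sum_def
    using rayleigh_sum_le_sum_largest nonincr_vec_eigvals assms by blast
qed

lemma eigvals_sum_eq_rayleigh_sum: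
  fixes A :: "((real,'n::{finite,linorder}) vec,'n) vec"
  assumes "transpose A = A"
  obtains W where "orthogonal_matrix W" "eigvals_sum T A = (\<Sum>j\<in>T. column j W \<bullet> (A *v column j W))"
proof -
  obtain U where "orthogonal_matrix U" "A = U ** diag_mat (eigvals A) ** transpose U"
    using eigvals_spectral_decomposition[OF assms] .
  thus ?thesis by (intro that[of U]) (simp_all add: eigvals_sum_def rayleigh_quotient_column)
qed

lemma eigvals_sum_diff_le:
  fixes A B :: "((real,'n::{finite,linorder}) vec,'n) vec"
  assumes sA: "transpose A = A" and sB: "transpose B = B" and T: "down_closed T"
  shows "eigvals_sum T A - eigvals_sum T B \<le> real CARD('n) * norm (A - B)"
proof -
  obtain W where W: "orthogonal_matrix W" "eigvals_sum T A = (\<Sum>j\<in>T. column j W \<bullet> (A *v column j W))"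
    using eigvals_sum_eq_rayleigh_sum[OF sA] by blast
  have unit: "norm (column j W) = 1" for j
    using W(1) orthogonal_matrix_orthonormal_columns by blast
  have "eigvals_sum T A - eigvals_sum T B \<le> (\<Sum>j\<in>T. column j W \<bullet> ((A - B) *v column j W))"
    using rayleigh_sum_le_eigvals_sum[OF sB T W(1), of T] W(2)
    by (simp add: matrix_vector_mult_diff_rdistrib inner_diff_right sum_subtractf)
  also have "\<dots> \<le> (\<Sum>j\<in>T. norm (A - B))"
  proof (rule sum_mono)
    fix j
    have "column j W \<bullet> ((A - B) *v column j W) \<le> norm ((A - B) *v column j W)"
      using abs_le_D1[OF Cauchy_Schwarz_ineq2[of "column j W"]] unit by simp
    also have "\<dots> \<le> norm (A - B)" using norm_matrix_vector_le[of "A - B" "column j W"] unit by simp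
    finally show "column j W \<bullet> ((A - B) *v column j W) \<le> norm (A - B)" .
  qed
  also have "\<dots> \<le> real CARD('n) * norm (A - B)"
    by (simp add: card_mono mult_right_mono)
  finally show ?thesis .
qed

lemma eigvals_nth_lipschitz:
  fixes A B :: "((real,'n::{finite,linorder}) vec,'n) vec"
  assumes "transpose A = A" and "transpose B = B"
  shows "\<bar>eigvals A $ i - eigvals B $ i\<bar> \<le> 2 * real CARD('n) * norm (A - B)"
  using eigvals_sum_diff_le[OF assms down_closed_atMost[of i]]
    eigvals_sum_diff_le[OF assms(2,1) down_closed_atMost[of i]]
    eigvals_sum_diff_le[OF assms down_closed_lessThan[of i]]
    eigvals_sum_diff_le[OF assms(2,1) down_closed_lessThan[of i]]
  unfolding eigvals_nth_eq_eigvals_sum_diff by (simp add: norm_minus_commute abs_le_iff)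

lemma eigvals_lipschitz:
  fixes A B :: "((real,'n::{finite,linorder}) vec,'n) vec"
  assumes "transpose A = A" and "transpose B = B"
  shows "norm (eigvals A - eigvals B) \<le> 2 * (real CARD('n))\<^sup>2 * norm (A - B)"
  using norm_le_card_mult_nth_bound[of "eigvals A - eigvals B" "2 * real CARD('n) * norm (A - B)"]
    eigvals_nth_lipschitz[OF assms] by (simp add: power2_eq_square mult_ac)

lemma eigvals_sum_convex:
  fixes A B :: "((real,'n::{finite,linorder}) vec,'n) vec"
  assumes sA: "transpose A = A" and sB: "transpose B = B" and T: "down_closed T"
    and s0: "0 \<le> s" and s1: "s \<le> 1"
  shows "eigvals_sum T ((1 - s) *\<^sub>R A + s *\<^sub>R B) \<le> (1 - s) * eigvals_sum T A + s * eigvals_sum T B"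
proof -
  define C where "C = (1 - s) *\<^sub>R A + s *\<^sub>R B"
  have "transpose C = C" unfolding C_def using sA sB by (simp add: transpose_def vec_eq_iff)
  then obtain W where W: "orthogonal_matrix W"
    and C_rayleigh: "eigvals_sum T C = (\<Sum>j\<in>T. column j W \<bullet> (C *v column j W))"
    using eigvals_sum_eq_rayleigh_sum by blast
  have "eigvals_sum T C = (1 - s) * (\<Sum>j\<in>T. column j W \<bullet> (A *v column j W))
      + s * (\<Sum>j\<in>T. column j W \<bullet> (B *v column j W))"
    using C_rayleigh unfolding C_def
    by (simp add: matrix_vector_mult_add_rdistrib inner_add_right sum.distrib sum_distrib_left
        flip: scaleR_matrix_vector_assoc)
  also have "\<dots> \<le> (1 - s) * eigvals_sum T A + s * eigvals_sum T B"
    using s0 s1 rayleigh_sum_le_eigvals_sum[OF sA T W, of T] rayleigh_sum_le_eigvals_sum[OF sB T W, of T]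
    by (intro add_mono mult_left_mono) simp_all
  finally show ?thesis unfolding C_def .
qed

lemma mono_bounded_below_tendsto_at_right_0:
  fixes q :: "real \<Rightarrow> real"
  assumes mono: "\<And>s t. 0 < s \<Longrightarrow> s \<le> t \<Longrightarrow> q s \<le> q t" and bound: "\<And>t. 0 < t \<Longrightarrow> c \<le> q t"
  shows "(q \<longlongrightarrow> Inf (q ` {0<..})) (at_right 0)"
proof (rule order_tendstoI)
  have bdd: "bdd_below (q ` {0<..})" using bound by (intro bdd_belowI[of _ c]) auto
  fix y assume "y < Inf (q ` {0<..})"
  moreover have "Inf (q ` {0<..}) \<le> q t" if "0 < t" for t using bdd that by (auto intro: cInf_lower)
  ultimately show "eventually (\<lambda>t. y < q t) (at_right 0)"
    unfolding eventually_at_right_field by (intro exI[of _ 1]) force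
next
  fix y assume "Inf (q ` {0<..}) < y"
  then obtain t0 where t0: "0 < t0" "q t0 < y" using cInf_lessD[of "q ` {0<..}" y] by auto
  show "eventually (\<lambda>t. q t < y) (at_right 0)"
    unfolding eventually_at_right_field using t0 mono[of _ t0] by (intro exI[of _ t0]) force
qed

lemma convex_difference_quotient_tendsto:
  fixes \<phi> :: "real \<Rightarrow> real"
  assumes conv: "\<And>s t. 0 \<le> s \<Longrightarrow> s \<le> 1 \<Longrightarrow> 0 \<le> t \<Longrightarrow> \<phi> (s * t) \<le> (1 - s) * \<phi> 0 + s * \<phi> t"
    and lip: "\<And>t. 0 < t \<Longrightarrow> \<phi> 0 - \<phi> t \<le> K * t"
  shows "\<exists>L. ((\<lambda>t. (\<phi> t - \<phi> 0) / t) \<longlongrightarrow> L) (at_right 0)"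
proof -
  have "(\<phi> s - \<phi> 0) / s \<le> (\<phi> t - \<phi> 0) / t" if "0 < s" "s \<le> t" for s t
  proof -
    have "\<phi> ((s / t) * t) \<le> (1 - s / t) * \<phi> 0 + (s / t) * \<phi> t"
      using that by (intro conv) auto
    moreover have "(1 - s / t) * \<phi> 0 + (s / t) * \<phi> t = \<phi> 0 + s * ((\<phi> t - \<phi> 0) / t)"
      using that by (simp add: field_simps)
    ultimately have "\<phi> s - \<phi> 0 \<le> s * ((\<phi> t - \<phi> 0) / t)" using that by simp
    thus ?thesis using that by (simp add: pos_divide_le_eq mult.commute)
  qed
  moreover have "- K \<le> (\<phi> t - \<phi> 0) / t" if "0 < t" for t
    using lip[OF that] that by (simp add: le_divide_eq)
  ultimately show ?thesis by (blast intro: mono_bounded_below_tendsto_at_right_0)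
qed

lemma eigvals_sum_directional_limit:
  fixes X H :: "((real,'n::{finite,linorder}) vec,'n) vec"
  assumes sX: "transpose X = X" and sH: "transpose H = H" and T: "down_closed T"
  shows "\<exists>L. ((\<lambda>t. (eigvals_sum T (X + t *\<^sub>R H) - eigvals_sum T X) / t) \<longlongrightarrow> L) (at_right 0)"
proof -
  have sXtH: "transpose (X + t *\<^sub>R H) = X + t *\<^sub>R H" for t
    using sX sH by (rule transpose_add_scaleR)
  have "\<exists>L. ((\<lambda>t. (eigvals_sum T (X + t *\<^sub>R H) - eigvals_sum T (X + 0 *\<^sub>R H)) / t) \<longlongrightarrow> L) (at_right 0)"
  proof (rule convex_difference_quotient_tendsto)
    fix s t :: real assume "0 \<le> s" "s \<le> 1" "0 \<le> t"
    moreover have "X + (s * t) *\<^sub>R H = (1 - s) *\<^sub>R X + s *\<^sub>R (X + t *\<^sub>R H)"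
      by (simp add: algebra_simps)
    ultimately show "eigvals_sum T (X + (s * t) *\<^sub>R H)
        \<le> (1 - s) * eigvals_sum T (X + 0 *\<^sub>R H) + s * eigvals_sum T (X + t *\<^sub>R H)"
      using eigvals_sum_convex[OF sX sXtH T] by simp
  next
    fix t :: real assume "0 < t"
    thus "eigvals_sum T (X + 0 *\<^sub>R H) - eigvals_sum T (X + t *\<^sub>R H) \<le> (real CARD('n) * norm H) * t"
      using eigvals_sum_diff_le[OF sX sXtH[of t] T] by (simp add: mult_ac)
  qed
  thus ?thesis by simp
qed

lemma eigvals_dir_tendsto:
  fixes X H :: "((real,'n::{finite,linorder}) vec,'n) vec"
  assumes sX: "transpose X = X" and sH: "transpose H = H"
  shows "((\<lambda>t. (1 / t) *\<^sub>R (eigvals (X + t *\<^sub>R H) - eigvals X)) \<longlongrightarrow> eigvals_dir X H) (at_right 0)"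
proof -
  define dq where "dq T t = (eigvals_sum T (X + t *\<^sub>R H) - eigvals_sum T X) / t" for T t
  have "\<forall>i. \<exists>L. (dq {..i} \<longlongrightarrow> L) (at_right 0)"
    unfolding dq_def using eigvals_sum_directional_limit[OF sX sH down_closed_atMost] by blast
  then obtain L1 where L1: "\<And>i. (dq {..i} \<longlongrightarrow> L1 i) (at_right 0)" by metis
  have "\<forall>i. \<exists>L. (dq {..<i} \<longlongrightarrow> L) (at_right 0)"
    unfolding dq_def using eigvals_sum_directional_limit[OF sX sH down_closed_lessThan] by blast
  then obtain L0 where L0: "\<And>i. (dq {..<i} \<longlongrightarrow> L0 i) (at_right 0)" by metis
  have "((\<lambda>t. (1 / t) *\<^sub>R (eigvals (X + t *\<^sub>R H) - eigvals X)) \<longlongrightarrow> (\<chi> i. L1 i - L0 i)) (at_right 0)"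
  proof (rule vec_tendstoI)
    fix i
    have "((\<lambda>t. dq {..i} t - dq {..<i} t) \<longlongrightarrow> L1 i - L0 i) (at_right 0)"
      using L1 L0 by (rule tendsto_diff)
    moreover have "dq {..i} t - dq {..<i} t = ((1 / t) *\<^sub>R (eigvals (X + t *\<^sub>R H) - eigvals X)) $ i" for t
      unfolding dq_def by (simp add: diff_divide_distrib eigvals_nth_eq_eigvals_sum_diff)
    ultimately show "((\<lambda>t. ((1 / t) *\<^sub>R (eigvals (X + t *\<^sub>R H) - eigvals X)) $ i)
        \<longlongrightarrow> (\<chi> i. L1 i - L0 i) $ i) (at_right 0)" by simp
  qed
  moreover from this have "eigvals_dir X H = (\<chi> i. L1 i - L0 i)"
    unfolding eigvals_dir_def by (rule tendsto_Lim[OF trivial_limit_at_right_real])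
  ultimately show ?thesis by simp
qed

section \<open>Subderivatives of spectral functions\<close>

lemma Liminf_le_Liminf_filterlim:
  assumes "filterlim m G F" and "eventually (\<lambda>y. g (m y) = f y) F"
  shows "Liminf G g \<le> Liminf F f"
proof -
  have "Liminf G g \<le> Liminf (filtermap m F) g"
    using assms(1) unfolding filterlim_def Liminf_def
    by (intro SUP_subset_mono) (auto simp: le_filter_def)
  also have "\<dots> \<le> Liminf F (\<lambda>y. g (m y))" by (rule Liminf_filtermap_le)
  also have "\<dots> = Liminf F f" using assms(2) by (rule Liminf_eq)
  finally show ?thesis .
qed

lemma eigvals_difference_quotient_lipschitz:
  fixes X W H :: "((real,'n::{finite,linorder}) vec,'n) vec"
  assumes "transpose X = X" "transpose W = W" "transpose H = H" and t: "0 < t"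
  shows "norm ((1 / t) *\<^sub>R (eigvals (X + t *\<^sub>R W) - eigvals X) - (1 / t) *\<^sub>R (eigvals (X + t *\<^sub>R H) - eigvals X))
    \<le> 2 * (real CARD('n))\<^sup>2 * norm (W - H)"
proof -
  have "norm (eigvals (X + t *\<^sub>R W) - eigvals (X + t *\<^sub>R H))
      \<le> 2 * (real CARD('n))\<^sup>2 * norm ((X + t *\<^sub>R W) - (X + t *\<^sub>R H))"
    using assms by (intro eigvals_lipschitz transpose_add_scaleR)
  also have "(X + t *\<^sub>R W) - (X + t *\<^sub>R H) = t *\<^sub>R (W - H)" by (simp add: algebra_simps)
  finally show ?thesis
    using t by (simp add: algebra_simps pos_divide_le_eq flip: scaleR_diff_right)
qed

lemma subderiv_eigvals_dir_le_subderiv_comp_eigvals: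
  fixes \<theta> :: "(real, 'n::{finite,linorder}) vec \<Rightarrow> ereal" and X H :: "((real, 'n) vec, 'n) vec"
  assumes sX: "transpose X = X" and sH: "transpose H = H"
  shows "subderiv \<theta> UNIV (eigvals X) (eigvals_dir X H) \<le> subderiv (\<lambda>Y. \<theta> (eigvals Y)) sym_mats X H"
proof -
  define F where "F = at_right (0::real) \<times>\<^sub>F inf (nhds H) (principal sym_mats)"
  define q where "q t W = (1 / t) *\<^sub>R (eigvals (X + t *\<^sub>R W) - eigvals X)" for t W
  have evF: "eventually (\<lambda>y. 0 < fst y \<and> snd y \<in> sym_mats) F"
    unfolding F_def eventually_prod_filter
    by (intro exI[of _ "\<lambda>t. 0 < t"] exI[of _ "\<lambda>w. w \<in> sym_mats"])
       (auto simp: eventually_at_right_less eventually_inf_principal)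
  have qH: "((\<lambda>y. q (fst y) H) \<longlongrightarrow> eigvals_dir X H) F"
    unfolding F_def q_def by (rule filterlim_compose[OF eigvals_dir_tendsto[OF sX sH] filterlim_fst])
  have "((\<lambda>y. q (fst y) (snd y) - q (fst y) H) \<longlongrightarrow> 0) F"
  proof (rule Lim_null_comparison)
    show "eventually (\<lambda>y. norm (q (fst y) (snd y) - q (fst y) H) \<le> 2 * (real CARD('n))\<^sup>2 * norm (snd y - H)) F"
      using evF by eventually_elim
        (use sX sH in \<open>auto simp: q_def sym_mats_def intro: eigvals_difference_quotient_lipschitz\<close>)
    have "filterlim snd (inf (nhds H) (principal sym_mats)) F" unfolding F_def by (rule filterlim_snd)
    hence "(snd \<longlongrightarrow> H) F" by (simp add: filterlim_inf)
    thus "((\<lambda>y. 2 * (real CARD('n))\<^sup>2 * norm (snd y - H)) \<longlongrightarrow> 0) F"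
      by (intro tendsto_mult_right_zero tendsto_norm_zero LIM_zero)
  qed
  from tendsto_add[OF this qH] have "((\<lambda>y. q (fst y) (snd y)) \<longlongrightarrow> eigvals_dir X H) F" by simp
  hence "filterlim (\<lambda>y. (fst y, q (fst y) (snd y))) (at_right 0 \<times>\<^sub>F nhds (eigvals_dir X H)) F"
    unfolding F_def by (intro filterlim_Pair filterlim_fst)
  moreover have "eventually (\<lambda>y. (\<lambda>(t, w'). (\<theta> (eigvals X + t *\<^sub>R w') - \<theta> (eigvals X)) / ereal t)
      (fst y, q (fst y) (snd y)) = (\<lambda>(t, w'). (\<theta> (eigvals (X + t *\<^sub>R w')) - \<theta> (eigvals X)) / ereal t) y) F"
    using evF by eventually_elim (auto simp: q_def)
  ultimately show ?thesis
    unfolding subderiv_def F_def by (simp add: Liminf_le_Liminf_filterlim)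
qed

lemma subderiv_comp_eigvals_le_subderiv_eigvals_dir:
  fixes \<theta> :: "(real, 'n::{finite,linorder}) vec \<Rightarrow> ereal" and X H :: "((real, 'n) vec, 'n) vec"
  assumes \<theta>: "symmetric_fun \<theta>" and sX: "transpose X = X" and sH: "transpose H = H"
  shows "subderiv (\<lambda>Y. \<theta> (eigvals Y)) sym_mats X H \<le> subderiv \<theta> UNIV (eigvals X) (eigvals_dir X H)"
proof -
  define F where "F = at_right (0::real) \<times>\<^sub>F nhds (eigvals_dir X H)"
  define l where "l t = eigvals (X + t *\<^sub>R H)" for t
  define q where "q t = (1 / t) *\<^sub>R (l t - eigvals X)" for t
  have "\<forall>t. \<exists>U. orthogonal_matrix U \<and> X + t *\<^sub>R H = U ** diag_mat (l t) ** transpose U"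
    unfolding l_def using eigvals_spectral_decomposition[OF transpose_add_scaleR[OF sX sH]] by blast
  from choice[OF this] obtain U where U: "\<And>t. orthogonal_matrix (U t)"
    and XtH: "\<And>t. X + t *\<^sub>R H = U t ** diag_mat (l t) ** transpose (U t)"
    by blast
  (* Y t w has the eigenvalues of eigvals X + t w and differs from X + t H only in the
     diagonal factor, so no perturbation bound is needed in this direction. *)
  define Y where "Y t w = U t ** diag_mat (eigvals X + t *\<^sub>R w) ** transpose (U t)" for t w
  define G where "G y = (1 / fst y) *\<^sub>R (Y (fst y) (snd y) - X)" for y
  have evF: "eventually (\<lambda>y. 0 < fst y) F"
    unfolding F_def eventually_prod_filter
    by (intro exI[of _ "\<lambda>t. 0 < t"] exI[of _ "\<lambda>w. True"]) (auto simp: eventually_at_right_less)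
  have normG: "norm (G (t, w) - H) = norm (w - q t)" if "0 < t" for t w
  proof -
    have "G (t, w) - H = (1 / t) *\<^sub>R (Y t w - (X + t *\<^sub>R H))"
      using that by (simp add: G_def algebra_simps)
    also have "\<dots> = (1 / t) *\<^sub>R (U t ** diag_mat (eigvals X + t *\<^sub>R w - l t) ** transpose (U t))"
      unfolding Y_def XtH[of t]
      by (simp only: diag_mat_diff[symmetric] matrix_mul_diff_ldistrib matrix_mul_diff_rdistrib)
    finally have "norm (G (t, w) - H) = (1 / t) * norm (eigvals X + t *\<^sub>R w - l t)"
      using that by (simp add: norm_orthogonal_conj[OF U] norm_diag_mat)
    moreover have "w - q t = (1 / t) *\<^sub>R (eigvals X + t *\<^sub>R w - l t)"
      using that by (simp add: q_def algebra_simps)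
    ultimately show ?thesis using that by simp
  qed
  have "(G \<longlongrightarrow> H) F"
  proof (rule LIM_zero_cancel, rule Lim_null_comparison)
    show "eventually (\<lambda>y. norm (G y - H) \<le> norm (snd y - q (fst y))) F"
      using evF by eventually_elim (auto simp: normG split: prod.splits)
    have "((\<lambda>y. snd y - q (fst y)) \<longlongrightarrow> eigvals_dir X H - eigvals_dir X H) F"
      unfolding F_def q_def l_def
      by (intro tendsto_diff filterlim_snd filterlim_compose[OF eigvals_dir_tendsto[OF sX sH] filterlim_fst])
    thus "((\<lambda>y. norm (snd y - q (fst y))) \<longlongrightarrow> 0) F" by (simp add: tendsto_norm_zero)
  qed
  moreover have "G y \<in> sym_mats" for y
    using sX by (simp add: G_def Y_def sym_mats_def transpose_scalar transpose_diff transpose_conj_diag_mat)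
  ultimately have "filterlim (\<lambda>y. (fst y, G y)) (at_right 0 \<times>\<^sub>F inf (nhds H) (principal sym_mats)) F"
    unfolding F_def by (intro filterlim_Pair filterlim_fst) (simp add: filterlim_inf filterlim_principal)
  moreover have "eventually (\<lambda>y. (\<lambda>(t, w'). (\<theta> (eigvals (X + t *\<^sub>R w')) - \<theta> (eigvals X)) / ereal t)
      (fst y, G y) = (\<lambda>(t, w'). (\<theta> (eigvals X + t *\<^sub>R w') - \<theta> (eigvals X)) / ereal t) y) F"
    using evF
  proof eventually_elim
    case (elim y)
    obtain t w where y: "y = (t, w)" by (cases y)
    have "X + t *\<^sub>R G y = Y t w" using elim by (simp add: G_def y)
    hence "\<theta> (eigvals (X + t *\<^sub>R G y)) = \<theta> (eigvals X + t *\<^sub>R w)"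
      unfolding Y_def
      by (simp add: eigvals_orthogonal_conj[OF U transpose_diag_mat] symmetric_fun_eigvals_diag_mat[OF \<theta>])
    thus ?case by (simp add: y)
  qed
  ultimately show ?thesis
    unfolding subderiv_def F_def by (simp add: Liminf_le_Liminf_filterlim)
qed

theorem theorem3p5:
  fixes \<theta> :: "(real, 'n::{finite,linorder}) vec \<Rightarrow> ereal"
    and X H :: "((real, 'n) vec, 'n) vec"
  assumes "symmetric_fun \<theta>"
    and "X \<in> sym_mats"
    and "\<bar>\<theta> (eigvals X)\<bar> \<noteq> \<infinity>"
    and "(lsc_efun \<theta> \<and> convex_efun \<theta> \<and> subdiff \<theta> (eigvals X) \<noteq> {})
         \<or> loc_lipschitz_rel_dom \<theta> (eigvals X)"
    and "H \<in> sym_mats"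
  shows "subderiv (\<lambda>Y. \<theta> (eigvals Y)) sym_mats X H
         = subderiv \<theta> UNIV (eigvals X) (eigvals_dir X H)"
proof -
  have sX: "transpose X = X" and sH: "transpose H = H"
    using assms(2,5) unfolding sym_mats_def by simp_all
  show ?thesis
    using subderiv_comp_eigvals_le_subderiv_eigvals_dir[OF assms(1) sX sH]
      subderiv_eigvals_dir_le_subderiv_comp_eigvals[OF sX sH]
    by (rule antisym)
qed

end
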